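(* Fix $k\ge 2$ and let $D$ be either $A$ or $S$. Assume that for every sorted $2k$-tuple $x_1\le\dots\le x_{2k}$ of reals, the partition of $\{1,\dots,2k\}$ into $\{1,\dots,k\}$ and $\{k+1,\dots,2k\}$ is a minimal $k$-tuple partition with respect to $D$. Then for every $n\ge 1$ and every sorted $kn$-tuple $x_1\le x_2\le\dots\le x_{kn}$ of reals, the partition of $\{1,\dots,kn\}$ into the consecutive blocks $$B_i=\{(i-1)k+1,\,(i-1)k+2,\,\dots,\,ik\},\qquad i=1,\dots,n,$$ is a minimal $k$-tuple partition with respect to $D$.
   Context: For real numbers $x_1,\dots,x_k$ (repetitions allowed) define $A(x_1,\dots,x_k)=\sum_{1\le i<j\le k}|x_j-x_i|$ and $S(x_1,\dots,x_k)=\sum_{1\le i<j\le k}(x_j-x_i)^2$. Both depend only on the multiset of entries. Given real numbers $x_1,\dots,x_{kn}$, a $k$-tuple partition is a partition of the index set $\{1,\dots,kn\}$ into $n$ blocks, each of size $k$. The cost of the partition is the sum over the blocks $\{i_1,\dots,i_k\}$ of $D(x_{i_1},\dots,x_{i_k})$. A $k$-tuple partition is minimal with respect to $D$ if its cost is less than or equal to the cost of every other $k$-tuple partition. *)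

theory Defs
  imports Main "HOL-Library.Disjoint_Sets" Complex_Main
begin

text \<open>Entries are given by x :: nat => real, indexed on {1..m}.
  A block is a finite set of indices; D(x_{i_1},...,x_{i_k}) is the sum over
  pairs of distinct indices i < j in the block.\<close>

definition DA :: "(nat \<Rightarrow> real) \<Rightarrow> nat set \<Rightarrow> real" where
  "DA x B = (\<Sum>i\<in>B. \<Sum>j\<in>B. if i < j then \<bar>x j - x i\<bar> else 0)"

definition DS :: "(nat \<Rightarrow> real) \<Rightarrow> nat set \<Rightarrow> real" where
  "DS x B = (\<Sum>i\<in>B. \<Sum>j\<in>B. if i < j then (x j - x i)^2 else 0)"

definition ktuple_partition :: "nat \<Rightarrow> nat set \<Rightarrow> nat set set \<Rightarrow> bool" where
  "ktuple_partition k I P \<longleftrightarrow> partition_on I P \<and> (\<forall>B\<in>P. card B = k)"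

definition cost :: "((nat \<Rightarrow> real) \<Rightarrow> nat set \<Rightarrow> real) \<Rightarrow> (nat \<Rightarrow> real) \<Rightarrow> nat set set \<Rightarrow> real" where
  "cost D x P = (\<Sum>B\<in>P. D x B)"

definition minimal_partition ::
  "((nat \<Rightarrow> real) \<Rightarrow> nat set \<Rightarrow> real) \<Rightarrow> nat \<Rightarrow> (nat \<Rightarrow> real) \<Rightarrow> nat set \<Rightarrow> nat set set \<Rightarrow> bool" where
  "minimal_partition D k x I P \<longleftrightarrow> ktuple_partition k I P \<and>
     (\<forall>Q. ktuple_partition k I Q \<longrightarrow> cost D x P \<le> cost D x Q)"

end

theory Submission
  imports Defs
begin

text \<open>Both costs are invariant under order-preserving relabelling of the indices, so the
  hypothesis on sorted \<open>2k\<close>-tuples says: any two blocks \<open>B, C\<close> of a partition may be replaced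
  by the lower and the upper half of \<open>B \<union> C\<close> without increasing the cost. Applying this to a
  block \<open>B\<close> and a block containing a top index missing from \<open>B\<close> strictly increases the number
  of top indices in the upper half, so finitely many exchanges produce a partition that contains
  the top block \<open>{k(n-1)+1..kn}\<close>; removing it and inducting on \<open>n\<close> gives the theorem.\<close>

lemma DA_image:
  assumes "strict_mono_on S e"
  shows "DA x (e ` S) = DA (x \<circ> e) S"
proof -
  have "DA x (e ` S) = (\<Sum>i\<in>S. \<Sum>j\<in>S. if e i < e j then \<bar>x (e j) - x (e i)\<bar> else 0)"
    unfolding DA_def using strict_mono_on_imp_inj_on[OF assms] by (simp add: sum.reindex)
  also have "\<dots> = DA (x \<circ> e) S"
    unfolding DA_def using strict_mono_on_less[OF assms] by (intro sum.cong) auto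
  finally show ?thesis .
qed

lemma DS_image:
  assumes "strict_mono_on S e"
  shows "DS x (e ` S) = DS (x \<circ> e) S"
proof -
  have "DS x (e ` S) = (\<Sum>i\<in>S. \<Sum>j\<in>S. if e i < e j then (x (e j) - x (e i))^2 else 0)"
    unfolding DS_def using strict_mono_on_imp_inj_on[OF assms] by (simp add: sum.reindex)
  also have "\<dots> = DS (x \<circ> e) S"
    unfolding DS_def using strict_mono_on_less[OF assms] by (intro sum.cong) auto
  finally show ?thesis .
qed

lemma finite_set_order_iso:
  fixes U :: "nat set"
  assumes "finite U"
  obtains e where "strict_mono_on {1..card U} e" "e ` {1..card U} = U"
proof
  define xs where "xs = sorted_list_of_set U"
  have xs: "sorted_wrt (<) xs" "length xs = card U" "set xs = U"
    using assms by (simp_all add: xs_def)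
  show "strict_mono_on {1..card U} (\<lambda>i. xs ! (i - 1))"
  proof (rule strict_mono_onI)
    fix r s assume "r \<in> {1..card U}" "s \<in> {1..card U}" "r < s"
    then show "xs ! (r - 1) < xs ! (s - 1)"
      using sorted_wrt_nth_less[OF xs(1), of "r - 1" "s - 1"] xs(2) by auto
  qed
  have "(\<lambda>i. xs ! (i - 1)) ` {1..card U} = nth xs ` {0..<length xs}"
    unfolding image_Suc_lessThan[symmetric] image_image xs(2) by (simp add: atLeast0LessThan)
  then show "(\<lambda>i. xs ! (i - 1)) ` {1..card U} = U"
    using xs(3) by (simp add: nth_image)
qed

lemma ktuple_partition_Diff:
  assumes "ktuple_partition k I Q" "T \<in> Q"
  shows "ktuple_partition k (I - T) (Q - {T})"
proof -
  have "partition_on I (insert T (Q - {T}))"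
    using assms by (simp add: ktuple_partition_def insert_absorb)
  moreover have "disjnt T (\<Union>(Q - {T}))"
    using assms unfolding ktuple_partition_def partition_on_def disjoint_def disjnt_def by blast
  ultimately have "partition_on (I - T) (Q - {T})"
    using partition_on_insert by blast
  then show ?thesis
    using assms by (simp add: ktuple_partition_def)
qed

lemma ktuple_partition_exchange:
  assumes Q: "ktuple_partition k I Q" and k: "k \<ge> 1"
    and BC: "B \<in> Q" "C \<in> Q" "B \<noteq> C"
    and LH: "L \<union> H = B \<union> C" "L \<inter> H = {}" "card L = k" "card H = k"
  shows "ktuple_partition k I (insert L (insert H (Q - {B, C})))"
proof -
  have Q0: "ktuple_partition k (I - B - C) (Q - {B, C})"
    using ktuple_partition_Diff[OF ktuple_partition_Diff[OF Q BC(1)], of C] BC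
    by (metis Diff_insert2 insert_Diff_single insert_iff)
  have "B \<union> C \<subseteq> I"
    using Q BC unfolding ktuple_partition_def partition_on_def by auto
  then have "I - L - H = I - B - C" "H \<subseteq> I - L" "L \<subseteq> I"
    using LH by auto
  moreover have "L \<noteq> {}" "H \<noteq> {}"
    using LH k by auto
  moreover have "\<Union>(Q - {B, C}) = I - B - C"
    using Q0 partition_onD1 unfolding ktuple_partition_def by blast
  then have "disjnt H (\<Union>(Q - {B, C}))" "disjnt L (\<Union>(insert H (Q - {B, C})))"
    using LH unfolding disjnt_def by auto
  ultimately show ?thesis
    using Q0 LH unfolding ktuple_partition_def by (simp add: partition_on_insert)
qed

lemma cost_exchange:
  assumes I: "finite I" and Q: "ktuple_partition k I Q" and k: "k \<ge> 1"
    and BC: "B \<in> Q" "C \<in> Q" "B \<noteq> C"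
    and LH: "L \<union> H = B \<union> C" "L \<inter> H = {}" "card L = k" "card H = k"
  shows "cost D x (insert L (insert H (Q - {B, C}))) = cost D x Q - (D x B + D x C) + (D x L + D x H)"
proof -
  have "X \<inter> (B \<union> C) = {}" if "X \<in> Q - {B, C}" for X
    using that Q BC unfolding ktuple_partition_def partition_on_def disjoint_def by blast
  moreover have "L \<noteq> {}" "H \<noteq> {}"
    using LH k by auto
  ultimately have "L \<notin> Q - {B, C}" "H \<notin> Q - {B, C}" "L \<noteq> H"
    using LH by blast+
  moreover have "finite (Q - {B, C})"
    using I Q finite_elements by (auto simp: ktuple_partition_def)
  ultimately have "cost D x (insert L (insert H (Q - {B, C}))) = D x L + D x H + cost D x (Q - {B, C})"
    unfolding cost_def by simp
  moreover have "finite Q"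
    using I Q finite_elements by (auto simp: ktuple_partition_def)
  then have "cost D x Q = D x B + D x C + cost D x (Q - {B} - {C})"
    using BC unfolding cost_def by (simp add: sum.remove)
  moreover have "Q - {B} - {C} = Q - {B, C}"
    by auto
  ultimately show ?thesis
    by simp
qed

definition consecutive_blocks :: "nat \<Rightarrow> nat \<Rightarrow> nat set set" where
  "consecutive_blocks k n = (\<lambda>i. {(i-1)*k+1..i*k}) ` {1..n}"

lemma consecutive_blocks_Suc:
  "consecutive_blocks k (Suc n) = insert {k*n+1..k*Suc n} (consecutive_blocks k n)"
proof -
  have "{1..Suc n} = insert (Suc n) {1..n}"
    by auto
  then show ?thesis
    unfolding consecutive_blocks_def by (simp add: mult.commute)
qed

lemma top_block_notin_consecutive_blocks:
  assumes "k \<ge> 1"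
  shows "{k*n+1..k*Suc n} \<notin> consecutive_blocks k n"
  using assms unfolding consecutive_blocks_def by (auto simp: mult.commute)

lemma ktuple_partition_consecutive_blocks:
  assumes k: "k \<ge> 1"
  shows "ktuple_partition k {1..k*n} (consecutive_blocks k n)"
proof (induction n)
  case 0
  show ?case
    by (simp add: consecutive_blocks_def ktuple_partition_def partition_on_empty)
next
  case (Suc n)
  have "\<Union>(consecutive_blocks k n) = {1..k*n}"
    using Suc.IH unfolding ktuple_partition_def partition_on_def by auto
  then have "disjnt {k*n+1..k*Suc n} (\<Union>(consecutive_blocks k n))"
    by (auto simp: disjnt_def)
  moreover have "{1..k*Suc n} - {k*n+1..k*Suc n} = {1..k*n}"
    by auto
  ultimately show ?case
    using Suc.IH k unfolding ktuple_partition_def consecutive_blocks_Suc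
    by (auto simp: partition_on_insert)
qed

locale sorted_halves_minimal =
  fixes D :: "(nat \<Rightarrow> real) \<Rightarrow> nat set \<Rightarrow> real" and k :: nat
  assumes k_pos: "k \<ge> 1"
    and image_invariant: "\<And>S e x. strict_mono_on S e \<Longrightarrow> D x (e ` S) = D (x \<circ> e) S"
    and halves_minimal: "\<And>x. mono_on {1..2*k} x \<Longrightarrow>
      minimal_partition D k x {1..2*k} {{1..k}, {k+1..2*k}}"
begin

lemma split_into_halves:
  assumes U: "finite U" "card U = 2*k" and x: "mono_on U x"
    and BC: "B \<union> C = U" "B \<inter> C = {}" "card B = k" "card C = k"
  obtains L H where "L \<union> H = U" "card L = k" "card H = k" "\<forall>l\<in>L. \<forall>h\<in>H. l < h"
    "D x L + D x H \<le> D x B + D x C"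
proof -
  obtain e where e: "strict_mono_on {1..2*k} e" "e ` {1..2*k} = U"
    using finite_set_order_iso U by metis
  have inj: "inj_on e {1..2*k}"
    using e(1) by (rule strict_mono_on_imp_inj_on)
  define B' where "B' = {i \<in> {1..2*k}. e i \<in> B}"
  define C' where "C' = {i \<in> {1..2*k}. e i \<in> C}"
  have preimage: "e ` {i \<in> {1..2*k}. e i \<in> X} = X" if "X \<subseteq> U" for X
    using e(2) that by blast
  have image: "e ` B' = B" "e ` C' = C"
    using preimage BC(1) unfolding B'_def C'_def by auto
  have card: "card B' = k" "card C' = k"
    using image BC card_image inj_on_subset[OF inj] unfolding B'_def C'_def
    by (metis (no_types, lifting) mem_Collect_eq subsetI)+
  have "B' \<union> C' = {1..2*k}" "B' \<inter> C' = {}"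
    using e(2) BC unfolding B'_def C'_def by auto
  moreover have "B' \<noteq> {}" "C' \<noteq> {}"
    using card k_pos by auto
  ultimately have "ktuple_partition k {1..2*k} {B', C'}"
    using card unfolding ktuple_partition_def by (auto intro!: partition_onI simp: disjnt_def)
  moreover have "mono_on {1..2*k} (x \<circ> e)"
    using e x by (auto intro!: mono_onI mono_onD[OF x] strict_mono_on_leD[OF e(1)])
  ultimately have "cost D (x \<circ> e) {{1..k}, {k+1..2*k}} \<le> cost D (x \<circ> e) {B', C'}"
    using halves_minimal unfolding minimal_partition_def by blast
  moreover have "{1..k} \<noteq> {k+1..2*k}" "B' \<noteq> C'"
    using k_pos \<open>B' \<inter> C' = {}\<close> \<open>B' \<noteq> {}\<close> by auto
  ultimately have le: "D (x \<circ> e) {1..k} + D (x \<circ> e) {k+1..2*k} \<le> D (x \<circ> e) B' + D (x \<circ> e) C'"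
    by (simp add: cost_def)
  have mono_sub: "strict_mono_on S e" if "S \<subseteq> {1..2*k}" for S
    using e(1) that by (rule monotone_on_subset)
  show ?thesis
  proof
    show "e ` {1..k} \<union> e ` {k+1..2*k} = U"
      using e(2) by (auto simp flip: image_Un intro: arg_cong[where f="image e"])
    show "card (e ` {1..k}) = k" "card (e ` {k+1..2*k}) = k"
      using inj by (simp_all add: card_image inj_on_subset)
    show "\<forall>l\<in>e ` {1..k}. \<forall>h\<in>e ` {k+1..2*k}. l < h"
      using e(1) by (auto intro: strict_mono_onD)
    have "B' \<subseteq> {1..2*k}" "C' \<subseteq> {1..2*k}" "{1..k} \<subseteq> {1..2*k}" "{k+1..2*k} \<subseteq> {1..2*k}"
      unfolding B'_def C'_def by auto
    then show "D x (e ` {1..k}) + D x (e ` {k+1..2*k}) \<le> D x B + D x C"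
      using le image_invariant[OF mono_sub] by (simp flip: image)
  qed
qed


lemma top_block_exchange_step:
  assumes I: "finite I" and T: "T \<subseteq> I" "card T = k" "\<forall>t\<in>T. \<forall>u\<in>I - T. u < t"
    and x: "mono_on I x" and Q: "ktuple_partition k I Q" and B: "B \<in> Q" "\<not> T \<subseteq> B"
  obtains Q' B' where "ktuple_partition k I Q'" "B' \<in> Q'" "card (B \<inter> T) < card (B' \<inter> T)"
    "cost D x Q' \<le> cost D x Q"
proof -
  have part: "partition_on I Q" and card_blocks: "\<And>X. X \<in> Q \<Longrightarrow> card X = k"
    using Q unfolding ktuple_partition_def by auto
  obtain j where j: "j \<in> T" "j \<notin> B"
    using B(2) by blast
  then obtain C where C: "C \<in> Q" "j \<in> C"
    using T(1) partition_onD1[OF part] by blast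
  have "B \<noteq> C"
    using j C by blast
  then have "B \<inter> C = {}"
    using part B(1) C(1) unfolding partition_on_def disjoint_def by blast
  have fin: "finite B" "finite C"
    using card_blocks B(1) C(1) k_pos by (metis card.infinite not_one_le_zero)+
  have "B \<union> C \<subseteq> I"
    using partition_onD1[OF part] B(1) C(1) by blast
  obtain L H where LH: "L \<union> H = B \<union> C" "card L = k" "card H = k" "\<forall>l\<in>L. \<forall>h\<in>H. l < h"
      "D x L + D x H \<le> D x B + D x C"
    using split_into_halves[of "B \<union> C" x B C] fin \<open>B \<inter> C = {}\<close> \<open>B \<union> C \<subseteq> I\<close>
      card_blocks B(1) C(1) mono_on_subset[OF x]
    by (auto simp: card_Un_disjoint)
  have "L \<inter> H = {}"
    using LH(4) by blast
  \<comment> \<open>\<open>T\<close> is upward closed in \<open>I\<close>, so a \<open>T\<close>-element in \<open>L\<close> would put \<open>k + 1\<close> elements into \<open>T\<close>.\<close>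
  have "(B \<union> C) \<inter> T \<subseteq> H"
  proof
    fix u assume u: "u \<in> (B \<union> C) \<inter> T"
    show "u \<in> H"
    proof (rule ccontr)
      assume "u \<notin> H"
      then have "u \<in> L"
        using u LH(1) by blast
      have "h \<in> T" if "h \<in> H" for h
      proof (rule ccontr)
        assume "h \<notin> T"
        moreover have "h \<in> I"
          using that LH(1) \<open>B \<union> C \<subseteq> I\<close> by blast
        ultimately have "h < u"
          using T(3) u by blast
        moreover have "u < h"
          using LH(4) \<open>u \<in> L\<close> that by blast
        ultimately show False
          by simp
      qed
      then have "insert u H \<subseteq> T"
        using u by blast
      moreover have "finite T"
        using T(1) I by (rule finite_subset)
      ultimately have "card (insert u H) \<le> k"
        using T(2) card_mono by metis
      moreover have "finite H"
        using LH(3) k_pos by (metis card.infinite not_one_le_zero)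
      ultimately show False
        using \<open>u \<notin> H\<close> LH(3) by simp
    qed
  qed
  then have "B \<inter> T \<subset> H \<inter> T"
    using j C by blast
  then have "card (B \<inter> T) < card (H \<inter> T)"
    using T(1) I by (meson finite_Int finite_subset psubset_card_mono)
  moreover have "ktuple_partition k I (insert L (insert H (Q - {B, C})))"
    using ktuple_partition_exchange[OF Q k_pos B(1) C(1) \<open>B \<noteq> C\<close> LH(1) \<open>L \<inter> H = {}\<close> LH(2,3)] .
  moreover have "cost D x (insert L (insert H (Q - {B, C}))) \<le> cost D x Q"
    using cost_exchange[OF I Q k_pos B(1) C(1) \<open>B \<noteq> C\<close> LH(1) \<open>L \<inter> H = {}\<close> LH(2,3)] LH(5)
    by simp
  ultimately show ?thesis
    using that by blast
qed

lemma exists_partition_with_top_block: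
  assumes I: "finite I" and T: "T \<subseteq> I" "card T = k" "\<forall>t\<in>T. \<forall>u\<in>I - T. u < t"
    and x: "mono_on I x" and Q: "ktuple_partition k I Q"
  obtains Q' where "ktuple_partition k I Q'" "T \<in> Q'" "cost D x Q' \<le> cost D x Q"
proof -
  have "\<exists>Q'. ktuple_partition k I Q' \<and> T \<in> Q' \<and> cost D x Q' \<le> cost D x Q"
    if "ktuple_partition k I Q" "B \<in> Q" for Q B
    using that
  proof (induction "k - card (B \<inter> T)" arbitrary: Q B rule: less_induct)
    case less
    show ?case
    proof (cases "T \<subseteq> B")
      case True
      have "finite B" "card B = k"
        using less.prems k_pos unfolding ktuple_partition_def by (auto intro: card_ge_0_finite)
      then have "T = B"
        using True T(2) by (simp add: card_subset_eq)
      then show ?thesis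
        using less.prems by blast
    next
      case False
      obtain Q' B' where Q': "ktuple_partition k I Q'" "B' \<in> Q'" "card (B \<inter> T) < card (B' \<inter> T)"
        "cost D x Q' \<le> cost D x Q"
        using top_block_exchange_step[OF I T x less.prems False] .
      have "card (B' \<inter> T) \<le> card T"
        using finite_subset[OF T(1) I] by (rule card_mono) blast
      then have "k - card (B' \<inter> T) < k - card (B \<inter> T)"
        using Q'(3) T(2) by simp
      then obtain Q'' where "ktuple_partition k I Q''" "T \<in> Q''" "cost D x Q'' \<le> cost D x Q'"
        using less.hyps[OF _ Q'(1,2)] by blast
      then show ?thesis
        using Q'(4) by force
    qed
  qed
  moreover have "T \<noteq> {}"
    using T(2) k_pos by auto
  then obtain B where "B \<in> Q"
    using Q T(1) partition_onD1 unfolding ktuple_partition_def by blast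
  ultimately show ?thesis
    using Q that by blast
qed

lemma consecutive_blocks_minimal:
  assumes "mono_on {1..k*n} x" "ktuple_partition k {1..k*n} Q"
  shows "cost D x (consecutive_blocks k n) \<le> cost D x Q"
  using assms
proof (induction n arbitrary: Q)
  case 0
  then show ?case
    by (simp add: consecutive_blocks_def ktuple_partition_def partition_on_empty cost_def)
next
  case (Suc n)
  define T where "T = {k*n+1..k*Suc n}"
  have "T \<subseteq> {1..k*Suc n}" "card T = k" "\<forall>t\<in>T. \<forall>u\<in>{1..k*Suc n} - T. u < t"
    unfolding T_def by auto
  then obtain Q' where Q': "ktuple_partition k {1..k*Suc n} Q'" "T \<in> Q'" "cost D x Q' \<le> cost D x Q"
    using exists_partition_with_top_block Suc.prems by blast
  have "{1..k*Suc n} - T = {1..k*n}"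
    unfolding T_def by auto
  then have "cost D x (consecutive_blocks k n) \<le> cost D x (Q' - {T})"
    using Suc.IH ktuple_partition_Diff[OF Q'(1,2)] mono_on_subset[OF Suc.prems(1)] by auto
  moreover have "finite Q'"
    using Q'(1) finite_elements unfolding ktuple_partition_def by blast
  then have "cost D x Q' = D x T + cost D x (Q' - {T})"
    using Q'(2) unfolding cost_def by (rule sum.remove)
  moreover have "cost D x (consecutive_blocks k (Suc n)) = D x T + cost D x (consecutive_blocks k n)"
    using top_block_notin_consecutive_blocks[OF k_pos, of n]
    unfolding consecutive_blocks_Suc cost_def T_def by (simp add: consecutive_blocks_def)
  ultimately show ?case
    using Q'(3) by simp
qed

end

theorem theorem1p4:
  fixes k :: nat and D :: "(nat \<Rightarrow> real) \<Rightarrow> nat set \<Rightarrow> real"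
  assumes "k \<ge> 2"
    and "D = DA \<or> D = DS"
    and "\<forall>x :: nat \<Rightarrow> real. mono_on {1..2*k} x \<longrightarrow>
           minimal_partition D k x {1..2*k} {{1..k}, {k+1..2*k}}"
  shows "\<forall>n \<ge> 1. \<forall>x :: nat \<Rightarrow> real. mono_on {1..k*n} x \<longrightarrow>
           minimal_partition D k x {1..k*n} ((\<lambda>i. {(i-1)*k+1..i*k}) ` {1..n})"
proof (intro allI impI)
  fix n :: nat and x :: "nat \<Rightarrow> real"
  assume x: "mono_on {1..k*n} x"
  interpret sorted_halves_minimal D k
  proof
    show "k \<ge> 1"
      using assms(1) by simp
    show "D x (e ` S) = D (x \<circ> e) S" if "strict_mono_on S e" for S e and x :: "nat \<Rightarrow> real"
      using assms(2) DA_image[OF that] DS_image[OF that] by auto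
  qed (use assms(3) in blast)
  show "minimal_partition D k x {1..k*n} ((\<lambda>i. {(i-1)*k+1..i*k}) ` {1..n})"
    using ktuple_partition_consecutive_blocks[OF k_pos] consecutive_blocks_minimal[OF x]
    unfolding minimal_partition_def consecutive_blocks_def by blast
qed

end
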